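(* Let $n \geq 3$. If $Z : \mathcal{T}_o^n \to \mathcal{K}_o^n$ is an $\mathrm{SL}(n)$ contravariant $L_\infty$ Minkowski valuation, then $ZT= \{o\}$ for every $T \in \mathcal{T}_o^n$ with $\dim T < n$.
   Context: $\mathcal{K}_o^n$ denotes the set of convex bodies (compact convex sets) in $\mathbb{R}^n$ containing the origin $o$, and $\mathcal{T}_o^n$ the set of simplices (of any dimension) in $\mathbb{R}^n$ having the origin as one of their vertices. For $K,L\in\mathcal{K}_o^n$, $K+_\infty L$ is the convex body with support function $\max\{h_K,h_L\}$ ($h$ denoting support functions), i.e. the convex hull of $K\cup L$. $Z$ is an $L_\infty$ Minkowski valuation on $\mathcal{T}_o^n$ if $Z(K\cup L)+_\infty Z(K\cap L)=ZK+_\infty ZL$ whenever $K,L,K\cup L,K\cap L\in\mathcal{T}_o^n$. $Z$ is $\mathrm{SL}(n)$ contravariant if $Z(\phi K)=\phi^{-t}ZK$ for all $K$ and all $\phi\in\mathrm{SL}(n)$. *)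

theory Defs
  imports "HOL-Analysis.Analysis"
begin

definition convex_bodies_o :: "(real^'n) set set" where
  "convex_bodies_o = {K. compact K \<and> convex K \<and> 0 \<in> K}"

definition simplices_o :: "(real^'n) set set" where
  "simplices_o = {T. \<exists>V. finite V \<and> \<not> affine_dependent V \<and> 0 \<in> V \<and> T = convex hull V}"

definition linf_plus :: "(real^'n) set \<Rightarrow> (real^'n) set \<Rightarrow> (real^'n) set" where
  "linf_plus K L = convex hull (K \<union> L)"

definition linf_valuation_on_simplices :: "((real^'n) set \<Rightarrow> (real^'n) set) \<Rightarrow> bool" where
  "linf_valuation_on_simplices Z \<longleftrightarrow>
     (\<forall>K L. K \<in> simplices_o \<and> L \<in> simplices_o \<and> K \<union> L \<in> simplices_o \<and> K \<inter> L \<in> simplices_o \<longrightarrow>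
        linf_plus (Z (K \<union> L)) (Z (K \<inter> L)) = linf_plus (Z K) (Z L))"

definition SL_contravariant_on_simplices :: "((real^'n) set \<Rightarrow> (real^'n) set) \<Rightarrow> bool" where
  "SL_contravariant_on_simplices Z \<longleftrightarrow>
     (\<forall>A :: real^'n^'n. \<forall>K \<in> simplices_o. det A = 1 \<longrightarrow>
        Z ((\<lambda>x. A *v x) ` K) = (\<lambda>x. matrix_inv (transpose A) *v x) ` Z K)"

end

theory Submission
  imports Defs
begin

text \<open>If \<open>T\<close> is orthogonal to \<open>u \<noteq> 0\<close>, the shears \<open>x \<mapsto> x + (u \<bullet> x) a\<close> with \<open>a \<bullet> u = 0\<close> have
  determinant one and fix \<open>T\<close>, so \<open>Z T\<close> is invariant under the contragredient shears
  \<open>y \<mapsto> y + (a \<bullet> y) u\<close>; being bounded, \<open>Z T\<close> lies on the line \<open>span {u}\<close>. A simplex of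
  codimension at least two has two independent normals, so then \<open>Z T = {0}\<close>.

  If \<open>T = conv ({0, p, q} \<union> R)\<close> spans a hyperplane, cut it through \<open>0\<close>, \<open>R\<close> and the midpoint of
  \<open>p\<close> and \<open>q\<close>. Each half is the image of \<open>T\<close> under an \<open>SL(n)\<close> map that moves \<open>q\<close> (resp. \<open>p\<close>) to
  the midpoint, fixes the other vertices and doubles the normal, so its \<open>Z\<close>-value is \<open>Z T / 2\<close>;
  the cut face has codimension two. The valuation property thus gives \<open>Z T = Z T / 2\<close>, and a
  compact set with this property is \<open>{0}\<close>.\<close>

definition rank_one_update :: "real^'n \<Rightarrow> real^'n \<Rightarrow> real^'n \<Rightarrow> real^'n" where
  "rank_one_update a b x = x + (b \<bullet> x) *\<^sub>R a"

lemma linear_rank_one_update: "linear (rank_one_update a b)"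
  by (rule linearI) (auto simp: rank_one_update_def inner_add_right algebra_simps)

lemma adjoint_rank_one_update: "adjoint (rank_one_update a b) = rank_one_update b a"
  by (rule adjoint_unique)
    (simp add: rank_one_update_def inner_add_left inner_add_right inner_commute algebra_simps)

lemma matrix_rank_one_update:
  "matrix (rank_one_update a b) = (\<chi> i j. (if i = j then 1 else 0) + a$i * b$j)"
proof -
  have "b \<bullet> axis j 1 = b$j" for j by (simp add: inner_axis)
  then show ?thesis
    by (simp add: matrix_def rank_one_update_def vec_eq_iff mult.commute) (simp add: axis_def)
qed

lemma det_identity_row_replaced:
  fixes r :: "real^'n"
  shows "det ((\<chi> i. if i = k then r else axis i 1) :: real^'n^'n) = r$k"
proof -
  let ?A = "(\<chi> i. if i = k then (r$k) *\<^sub>R axis k 1 else axis i 1) :: real^'n^'n"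
  have "det ?A = (\<Prod>i\<in>UNIV. ?A$i$i)" by (rule det_diagonal) (auto simp: axis_def)
  also have "\<dots> = (\<Prod>i\<in>UNIV. if i = k then r$k else 1)" by (rule prod.cong) (auto simp: axis_def)
  finally have det_A: "det ?A = r$k" by simp
  have rows: "row j ?A = (if j = k then (r$k) *\<^sub>R axis k 1 else axis j 1)" for j
    by (simp add: row_def)
  have "r = (\<Sum>j\<in>UNIV. r$j *\<^sub>R axis j 1)"
    by (simp add: vec_eq_iff axis_def sum.delta if_distrib cong: if_cong)
  also have "\<dots> = r$k *\<^sub>R axis k 1 + (\<Sum>j\<in>UNIV-{k}. r$j *\<^sub>R axis j 1)"
    by (simp add: sum.remove)
  finally have r: "r - r$k *\<^sub>R axis k 1 = (\<Sum>j\<in>UNIV-{k}. r$j *\<^sub>R axis j 1)"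
    by (metis add_diff_cancel_left')
  have "r - r$k *\<^sub>R axis k 1 \<in> vec.span {row j ?A |j. j \<noteq> k}"
    unfolding r span_vec_eq by (intro span_sum span_mul span_base) (auto simp: rows)
  then have "det (\<chi> i. if i = k then row k ?A + (r - r$k *\<^sub>R axis k 1) else row i ?A) = det ?A"
    by (rule det_row_span)
  moreover have "(\<chi> i. if i = k then row k ?A + (r - r$k *\<^sub>R axis k 1) else row i ?A)
      = (\<chi> i. if i = k then r else axis i 1)"
    by (simp add: rows vec_eq_iff)
  ultimately show ?thesis using det_A by simp
qed

text \<open>For \<open>a$k \<noteq> 0\<close>, the matrix \<open>C\<close> whose \<open>k\<close>-th column is \<open>a\<close> and whose other columns are
  those of the identity conjugates \<open>I + a b\<^sup>T\<close> into the identity with its \<open>k\<close>-th row replaced.\<close>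

lemma det_rank_one_update:
  fixes a b :: "real^'n"
  shows "det (matrix (rank_one_update a b)) = 1 + a \<bullet> b"
proof (cases "a = 0")
  case True
  then have "rank_one_update a b = id" by (simp add: rank_one_update_def fun_eq_iff)
  then show ?thesis using True by (simp add: matrix_id_mat_1)
next
  case False
  then obtain k where ak: "a$k \<noteq> 0" by (auto simp: vec_eq_iff)
  define C :: "real^'n^'n" where "C = (\<chi> i j. if j = k then a$i else (if i = j then 1 else 0))"
  define b' :: "real^'n" where "b' = (\<chi> j. \<Sum>l\<in>UNIV. b$l * C$l$j)"
  define M :: "real^'n^'n" where "M = (\<chi> i. if i = k then axis k 1 + b' else axis i 1)"
  have "transpose C = (\<chi> i. if i = k then a else axis i 1)"
    by (auto simp: C_def transpose_def vec_eq_iff axis_def)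
  then have det_C: "det C = a$k"
    by (metis det_transpose det_identity_row_replaced)
  have "det M = (axis k 1 + b')$k" unfolding M_def by (rule det_identity_row_replaced)
  also have "\<dots> = 1 + a \<bullet> b" by (simp add: b'_def C_def inner_vec_def mult.commute)
  finally have det_M: "det M = 1 + a \<bullet> b" .
  have M: "M$l$j = (if l = j then 1 else 0) + (if l = k then b'$j else 0)" for l j
    by (simp add: M_def axis_def)
  have "(C ** M)$i$j = C$i$j + a$i * b'$j" for i j
  proof -
    have "(C ** M)$i$j = (\<Sum>l\<in>UNIV. (if l = j then C$i$l else 0) + (if l = k then C$i$l * b'$j else 0))"
      by (simp add: matrix_matrix_mult_def M) (rule sum.cong, auto simp: algebra_simps)
    then show ?thesis by (simp add: sum.distrib C_def)
  qed
  moreover have "(matrix (rank_one_update a b) ** C)$i$j = C$i$j + a$i * b'$j" for i j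
  proof -
    have "(matrix (rank_one_update a b) ** C)$i$j
        = (\<Sum>l\<in>UNIV. (if i = l then C$l$j else 0) + a$i * (b$l * C$l$j))"
      by (simp add: matrix_matrix_mult_def matrix_rank_one_update) (rule sum.cong, auto simp: algebra_simps)
    then show ?thesis by (simp add: sum.distrib sum_distrib_left b'_def)
  qed
  ultimately have "C ** M = matrix (rank_one_update a b) ** C" by (simp add: vec_eq_iff)
  then have "det C * det M = det (matrix (rank_one_update a b)) * det C"
    by (metis det_mul)
  with det_C det_M ak show ?thesis by simp
qed

lemma image_matrix_inv_eq_vimage:
  fixes B :: "real^'n^'n"
  assumes "invertible B"
  shows "(\<lambda>x. matrix_inv B *v x) ` S = (\<lambda>x. B *v x) -` S"
proof -
  have inv: "B ** matrix_inv B = mat 1 \<and> matrix_inv B ** B = mat 1"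
    using assms unfolding invertible_def matrix_inv_def by (rule someI_ex)
  show ?thesis
  proof (intro set_eqI iffI)
    fix x assume "x \<in> (\<lambda>x. matrix_inv B *v x) ` S"
    then show "x \<in> (\<lambda>x. B *v x) -` S" using inv by (auto simp: matrix_vector_mul_assoc)
  next
    fix x assume "x \<in> (\<lambda>x. B *v x) -` S"
    moreover have "x = matrix_inv B *v (B *v x)" using inv by (simp add: matrix_vector_mul_assoc)
    ultimately show "x \<in> (\<lambda>x. matrix_inv B *v x) ` S" by blast
  qed
qed

lemma SL_contravariant_linear_image:
  fixes Z :: "(real^'n) set \<Rightarrow> (real^'n) set"
  assumes "SL_contravariant_on_simplices Z" "K \<in> simplices_o" "linear f" "det (matrix f) = 1"
  shows "Z (f ` K) = adjoint f -` Z K"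
proof -
  have f: "(\<lambda>x. matrix f *v x) = f" using assms(3) by (simp add: fun_eq_iff matrix_works)
  have "invertible (transpose (matrix f))" using assms(4) by (simp add: invertible_det_nz det_transpose)
  moreover have "Z ((\<lambda>x. matrix f *v x) ` K) = (\<lambda>x. matrix_inv (transpose (matrix f)) *v x) ` Z K"
    using assms(1,2,4) unfolding SL_contravariant_on_simplices_def by blast
  moreover have "adjoint f = (\<lambda>x. transpose (matrix f) *v x)"
    using adjoint_matrix[of "matrix f"] by (simp add: f)
  ultimately show ?thesis by (simp add: image_matrix_inv_eq_vimage f)
qed

lemma Z_subset_span_normal:
  fixes Z :: "(real^'n) set \<Rightarrow> (real^'n) set"
  assumes SL: "SL_contravariant_on_simplices Z" and T: "T \<in> simplices_o"
    and bounded: "bounded (Z T)" and u: "u \<noteq> 0" and normal: "\<forall>x\<in>T. u \<bullet> x = 0"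
  shows "Z T \<subseteq> span {u}"
proof
  fix y assume y: "y \<in> Z T"
  have shear: "y + (t * (w \<bullet> y)) *\<^sub>R u \<in> Z T" if "w \<bullet> u = 0" for w t
  proof -
    let ?f = "rank_one_update (t *\<^sub>R w) u"
    have "?f x = x" if "x \<in> T" for x using normal that by (simp add: rank_one_update_def)
    then have "?f ` T = T" by force
    moreover have "det (matrix ?f) = 1"
      using \<open>w \<bullet> u = 0\<close> by (simp add: det_rank_one_update)
    ultimately have "Z T = rank_one_update u (t *\<^sub>R w) -` Z T"
      using SL_contravariant_linear_image[OF SL T linear_rank_one_update, of "t *\<^sub>R w" u]
      by (simp add: adjoint_rank_one_update)
    then show ?thesis using y by (auto simp: rank_one_update_def mult.commute)
  qed
  obtain B where B: "\<And>z. z \<in> Z T \<Longrightarrow> norm z \<le> B" using bounded by (auto simp: bounded_iff)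
  have orth: "w \<bullet> y = 0" if "w \<bullet> u = 0" for w
  proof (rule ccontr)
    assume wy: "w \<bullet> y \<noteq> 0"
    define t where "t = (B + norm y + 1) / ((w \<bullet> y) * norm u)"
    have "norm ((t * (w \<bullet> y)) *\<^sub>R u) = \<bar>B + norm y + 1\<bar>"
      using wy u by (simp add: t_def)
    also have "\<dots> = B + norm y + 1" using B[OF y] norm_ge_zero[of y] by linarith
    finally have "norm ((t * (w \<bullet> y)) *\<^sub>R u) = B + norm y + 1" .
    moreover have "norm ((t * (w \<bullet> y)) *\<^sub>R u) \<le> norm (y + (t * (w \<bullet> y)) *\<^sub>R u) + norm y"
      by (metis add_diff_cancel_left' norm_triangle_ineq4 add.commute)
    ultimately show False using B[OF shear[OF that, of t]] by linarith
  qed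
  define w where "w = y - ((y \<bullet> u) / (u \<bullet> u)) *\<^sub>R u"
  have "w \<bullet> u = 0" using u by (simp add: w_def inner_diff_left)
  moreover from this have "w \<bullet> y = 0" by (rule orth)
  ultimately have "w \<bullet> w = 0" by (simp add: w_def inner_diff_right inner_commute)
  then have "y = ((y \<bullet> u) / (u \<bullet> u)) *\<^sub>R u" by (simp add: w_def)
  then show "y \<in> span {u}" by (metis span_base span_mul singletonI)
qed

lemma Z_eq_0_if_codim_ge_2:
  fixes Z :: "(real^'n) set \<Rightarrow> (real^'n) set"
  assumes SL: "SL_contravariant_on_simplices Z"
    and bodies: "\<forall>T \<in> simplices_o. Z T \<in> convex_bodies_o"
    and T: "T \<in> simplices_o" and sub: "T \<subseteq> span W" and dim: "dim W + 2 \<le> CARD('n)"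
  shows "Z T = {0}"
proof -
  have ZT: "compact (Z T)" "0 \<in> Z T" using bodies T by (auto simp: convex_bodies_o_def)
  define N where "N = {u \<in> UNIV. \<forall>x \<in> span W. orthogonal x u}"
  have "dim N + dim (span W) = dim (UNIV :: (real^'n) set)"
    unfolding N_def by (rule dim_subspace_orthogonal_to_vectors) (auto simp: subspace_span)
  then have dim_N: "dim N \<ge> 2" using dim by simp
  have "y = 0" if y: "y \<in> Z T" for y
  proof (rule ccontr)
    assume "y \<noteq> 0"
    have "N \<subseteq> span {y}"
    proof
      fix u assume u: "u \<in> N"
      show "u \<in> span {y}"
      proof (cases "u = 0")
        case False
        have "\<forall>x\<in>T. u \<bullet> x = 0" using u sub by (auto simp: N_def orthogonal_def inner_commute)
        then have "y \<in> span {u}"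
          using Z_subset_span_normal[OF SL T compact_imp_bounded[OF ZT(1)] False] y by blast
        then obtain c where "y = c *\<^sub>R u" by (auto simp: span_singleton)
        with \<open>y \<noteq> 0\<close> have "u = (1/c) *\<^sub>R y" by auto
        then show ?thesis by (simp add: span_mul span_base)
      qed (simp add: span_zero)
    qed
    then have "dim N \<le> 1" using dim_subset[of N "span {y}"] \<open>y \<noteq> 0\<close> by simp
    with dim_N show False by simp
  qed
  with ZT(2) show ?thesis by blast
qed

lemma affine_independent_injective_linear_image:
  fixes f :: "'a::euclidean_space \<Rightarrow> 'b::euclidean_space"
  assumes "linear f" "inj f" "\<not> affine_dependent S"
  shows "\<not> affine_dependent (f ` S)"
proof
  assume "affine_dependent (f ` S)"
  then obtain x where x: "x \<in> S" "f x \<in> affine hull (f ` S - {f x})"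
    unfolding affine_dependent_def by auto
  have "f ` S - {f x} = f ` (S - {x})" using assms(2) by (auto simp: inj_def)
  then have "f x \<in> f ` (affine hull (S - {x}))"
    using x(2) affine_hull_linear_image[of f] assms(1) linear_conv_bounded_linear by metis
  then have "x \<in> affine hull (S - {x})" using assms(2) by (auto simp: inj_def)
  with x(1) assms(3) show False unfolding affine_dependent_def by blast
qed

lemma independent_dual_vector:
  fixes I :: "'a::euclidean_space set"
  assumes "independent I" "a \<in> I"
  obtains g where "g \<bullet> a = 1" "\<And>b. b \<in> I - {a} \<Longrightarrow> g \<bullet> b = 0"
proof -
  have "a \<notin> span (I - {a})" using assms unfolding dependent_def by blast
  moreover obtain y z where y: "y \<in> span (I - {a})" and z: "\<And>w. w \<in> span (I - {a}) \<Longrightarrow> orthogonal z w"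
    and a: "a = y + z"
    using orthogonal_subspace_decomp_exists[of "I - {a}" a] by blast
  ultimately have "z \<noteq> 0" by auto
  have "z \<bullet> y = 0" using z[OF y] by (simp add: orthogonal_def)
  show ?thesis
  proof
    show "((1 / (z \<bullet> z)) *\<^sub>R z) \<bullet> a = 1" using \<open>z \<noteq> 0\<close> \<open>z \<bullet> y = 0\<close> by (simp add: a inner_add_right)
    show "((1 / (z \<bullet> z)) *\<^sub>R z) \<bullet> b = 0" if "b \<in> I - {a}" for b
      using z[OF span_base[OF that]] by (simp add: orthogonal_def)
  qed
qed

lemma convex_hull_in_simplices_o:
  assumes "finite V" "\<not> affine_dependent V" "0 \<in> V"
  shows "convex hull V \<in> simplices_o"
  using assms unfolding simplices_o_def by blast

text \<open>The weight of \<open>q\<close> moves, doubled, to the midpoint and the weight of \<open>p\<close> becomes \<open>e \<bullet> x\<close>;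
  hence \<open>p\<close> may be replaced by any point \<open>P\<close> when \<open>e \<bullet> x = 0\<close>.\<close>

lemma convex_hull_cut_at_midpoint:
  fixes p q e x P :: "real^'n"
  assumes R: "finite R" and distinct: "p \<noteq> q" "p \<noteq> 0" "q \<noteq> 0" "0 \<notin> R" "p \<notin> R" "q \<notin> R"
    and x: "x \<in> convex hull (insert 0 (insert p (insert q R)))"
    and e: "e \<bullet> p = 1" "e \<bullet> q = -1" "\<forall>r\<in>R. e \<bullet> r = 0" "e \<bullet> x \<ge> 0"
    and P: "P = p \<or> e \<bullet> x = 0"
  shows "x \<in> convex hull (insert 0 (insert P (insert (midpoint p q) R)))"
proof -
  let ?V = "insert 0 (insert p (insert q R))"
  let ?C = "convex hull (insert 0 (insert P (insert (midpoint p q) R)))"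
  have sum_V: "sum F ?V = F 0 + F p + F q + sum F R" for F :: "real^'n \<Rightarrow> 'b::comm_monoid_add"
    using R distinct by (simp add: add.assoc)
  obtain l where l0: "\<forall>v\<in>?V. 0 \<le> l v" and l1: "sum l ?V = 1" and lx: "(\<Sum>v\<in>?V. l v *\<^sub>R v) = x"
    using x R by (auto simp: convex_hull_finite)
  have x_eq: "x = l p *\<^sub>R p + l q *\<^sub>R q + (\<Sum>r\<in>R. l r *\<^sub>R r)" using lx by (simp add: sum_V)
  have "e \<bullet> (\<Sum>r\<in>R. l r *\<^sub>R r) = 0" using e(3) by (simp add: inner_sum_right)
  then have ex: "e \<bullet> x = l p - l q" using e by (simp add: x_eq inner_add_right)
  define \<mu> where "\<mu> v = (if v = p then l p - l q else if v = q then 2 * l q else l v)" for v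
  define \<phi> where "\<phi> v = (if v = p then P else if v = q then midpoint p q else v)" for v
  have "(\<Sum>v\<in>?V. \<mu> v *\<^sub>R \<phi> v) \<in> ?C"
  proof (rule convex_sum)
    have "sum \<mu> R = sum l R" using distinct by (intro sum.cong) (auto simp: \<mu>_def)
    then show "sum \<mu> ?V = 1" using l1 distinct by (simp add: sum_V \<mu>_def)
    show "0 \<le> \<mu> v" if "v \<in> ?V" for v using l0 that ex e(4) by (auto simp: \<mu>_def)
    show "\<phi> v \<in> ?C" if "v \<in> ?V" for v using that by (auto simp: \<phi>_def hull_inc)
  qed (use R in auto)
  moreover have "(\<Sum>v\<in>?V. \<mu> v *\<^sub>R \<phi> v) = x"
  proof -
    have "(\<Sum>r\<in>R. \<mu> r *\<^sub>R \<phi> r) = (\<Sum>r\<in>R. l r *\<^sub>R r)"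
      using distinct by (intro sum.cong) (auto simp: \<mu>_def \<phi>_def)
    then have "(\<Sum>v\<in>?V. \<mu> v *\<^sub>R \<phi> v)
        = (l p - l q) *\<^sub>R P + (2 * l q) *\<^sub>R midpoint p q + (\<Sum>r\<in>R. l r *\<^sub>R r)"
      using distinct by (simp add: sum_V \<mu>_def \<phi>_def)
    also have "\<dots> = x" using P ex by (auto simp: x_eq midpoint_def algebra_simps)
    finally show ?thesis .
  qed
  ultimately show ?thesis by simp
qed

lemma simplex_cut_at_midpoint:
  fixes p q e :: "real^'n"
  assumes R: "finite R" and distinct: "p \<noteq> q" "p \<noteq> 0" "q \<noteq> 0" "0 \<notin> R" "p \<notin> R" "q \<notin> R"
    and e: "e \<bullet> p = 1" "e \<bullet> q = -1" "\<forall>r\<in>R. e \<bullet> r = 0"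
  defines "T \<equiv> convex hull (insert 0 (insert p (insert q R)))" and "m \<equiv> midpoint p q"
  shows "T \<inter> {x. e \<bullet> x \<ge> 0} = convex hull (insert 0 (insert p (insert m R)))"
    and "T \<inter> {x. e \<bullet> x \<le> 0} = convex hull (insert 0 (insert q (insert m R)))"
    and "T \<inter> {x. e \<bullet> x = 0} = convex hull (insert 0 (insert m R))"
proof -
  have "p \<in> T" "q \<in> T" "0 \<in> T" "R \<subseteq> T" by (auto simp: T_def hull_inc)
  then have "m \<in> T"
    using convex_contains_segment[of T] midpoint_in_closed_segment[of p q] unfolding m_def
    by (metis convex_convex_hull subsetD T_def)
  have "e \<bullet> m = 0" using e by (simp add: m_def midpoint_def inner_add_right)
  have hull_sub: "convex hull W \<subseteq> T \<inter> H" if "W \<subseteq> T \<inter> H" "convex H" for W H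
    using that by (intro hull_minimal convex_Int) (auto simp: T_def)
  have cut: "x \<in> convex hull (insert 0 (insert P (insert m R)))"
    if "x \<in> T" "e \<bullet> x \<ge> 0" "P = p \<or> e \<bullet> x = 0" for x P
    using convex_hull_cut_at_midpoint[OF R distinct _ e] that by (simp add: T_def m_def)
  have cut': "x \<in> convex hull (insert 0 (insert q (insert m R)))" if "x \<in> T" "e \<bullet> x \<le> 0" for x
  proof -
    have "insert 0 (insert q (insert p R)) = insert 0 (insert p (insert q R))" by auto
    then show ?thesis
      using convex_hull_cut_at_midpoint[OF R distinct(1)[symmetric] distinct(3,2,4,6,5), of x "-e" q] e that
      by (simp add: T_def m_def midpoint_sym)
  qed
  show "T \<inter> {x. e \<bullet> x \<ge> 0} = convex hull (insert 0 (insert p (insert m R)))"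
  proof
    show "T \<inter> {x. e \<bullet> x \<ge> 0} \<subseteq> convex hull (insert 0 (insert p (insert m R)))"
      using cut by blast
    show "convex hull (insert 0 (insert p (insert m R))) \<subseteq> T \<inter> {x. e \<bullet> x \<ge> 0}"
      using \<open>p \<in> T\<close> \<open>0 \<in> T\<close> \<open>R \<subseteq> T\<close> \<open>m \<in> T\<close> \<open>e \<bullet> m = 0\<close> e
      by (intro hull_sub) (auto intro: convex_halfspace_ge)
  qed
  show "T \<inter> {x. e \<bullet> x \<le> 0} = convex hull (insert 0 (insert q (insert m R)))"
  proof
    show "T \<inter> {x. e \<bullet> x \<le> 0} \<subseteq> convex hull (insert 0 (insert q (insert m R)))"
      using cut' by blast
    show "convex hull (insert 0 (insert q (insert m R))) \<subseteq> T \<inter> {x. e \<bullet> x \<le> 0}"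
      using \<open>q \<in> T\<close> \<open>0 \<in> T\<close> \<open>R \<subseteq> T\<close> \<open>m \<in> T\<close> \<open>e \<bullet> m = 0\<close> e
      by (intro hull_sub) (auto intro: convex_halfspace_le)
  qed
  show "T \<inter> {x. e \<bullet> x = 0} = convex hull (insert 0 (insert m R))"
  proof
    show "T \<inter> {x. e \<bullet> x = 0} \<subseteq> convex hull (insert 0 (insert m R))"
      using cut[where P = m] by (auto simp: insert_absorb2)
    show "convex hull (insert 0 (insert m R)) \<subseteq> T \<inter> {x. e \<bullet> x = 0}"
      using \<open>0 \<in> T\<close> \<open>R \<subseteq> T\<close> \<open>m \<in> T\<close> \<open>e \<bullet> m = 0\<close> e
      by (intro hull_sub) (auto intro: convex_hyperplane)
  qed
qed

lemma adjoint_compose: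
  fixes f g :: "'a::euclidean_space \<Rightarrow> 'a"
  assumes "linear f" "linear g"
  shows "adjoint (f \<circ> g) = adjoint g \<circ> adjoint f"
  by (rule adjoint_unique) (simp add: adjoint_clauses assms)

lemma unimodular_map_to_midpoint:
  fixes p q u g :: "real^'n"
  assumes u: "u \<noteq> 0" "u \<bullet> p = 0" "u \<bullet> q = 0" "\<forall>r\<in>R. u \<bullet> r = 0"
    and g: "g \<bullet> q = 1" "g \<bullet> p = 0" "\<forall>r\<in>R. g \<bullet> r = 0"
  obtains f where "linear f" "det (matrix f) = 1" "f p = p" "f q = midpoint p q" "\<forall>r\<in>R. f r = r"
    "\<forall>z\<in>span {u}. adjoint f ((1/2) *\<^sub>R z) = z"
proof
  define c where "c = 1 / (u \<bullet> u)"
  define d where "d = midpoint p q - q"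
  define f where "f = rank_one_update (c *\<^sub>R u) u \<circ> rank_one_update d g"
  have cu: "c * (u \<bullet> u) = 1" using u(1) by (simp add: c_def)
  have dg: "d \<bullet> g = -1/2"
    using g by (simp add: d_def midpoint_def inner_commute[of _ g] inner_diff_right inner_add_right)
  have du: "d \<bullet> u = 0"
    using u by (simp add: d_def midpoint_def inner_commute[of _ u] inner_diff_right inner_add_right)
  have fix_normal: "rank_one_update (c *\<^sub>R u) u x = x" if "u \<bullet> x = 0" for x
    using that by (simp add: rank_one_update_def)
  show "linear f" unfolding f_def by (intro linear_compose linear_rank_one_update)
  have "matrix f = matrix (rank_one_update (c *\<^sub>R u) u) ** matrix (rank_one_update d g)"
    unfolding f_def by (rule matrix_compose[OF linear_rank_one_update linear_rank_one_update])
  then show "det (matrix f) = 1" using cu dg by (simp add: det_mul det_rank_one_update)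
  show "f p = p" using u g fix_normal by (simp add: f_def rank_one_update_def)
  have "u \<bullet> midpoint p q = 0" using u by (simp add: midpoint_def inner_add_right)
  then show "f q = midpoint p q" using g fix_normal by (simp add: f_def rank_one_update_def d_def)
  show "\<forall>r\<in>R. f r = r" using u g fix_normal by (simp add: f_def rank_one_update_def)
  have adjoint_f: "adjoint f = rank_one_update g d \<circ> rank_one_update u (c *\<^sub>R u)"
    unfolding f_def by (simp add: adjoint_compose linear_rank_one_update adjoint_rank_one_update)
  show "\<forall>z\<in>span {u}. adjoint f ((1/2) *\<^sub>R z) = z"
  proof
    fix z assume "z \<in> span {u}"
    then obtain s where z: "z = s *\<^sub>R u" by (auto simp: span_singleton)
    have "(c *\<^sub>R u) \<bullet> ((1/2) *\<^sub>R z) = (s/2) * (c * (u \<bullet> u))" by (simp add: z algebra_simps)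
    then have "rank_one_update u (c *\<^sub>R u) ((1/2) *\<^sub>R z) = z"
      using cu by (simp add: rank_one_update_def z vec_eq_iff field_simps)
    moreover have "rank_one_update g d z = z" using du by (simp add: rank_one_update_def z)
    ultimately show "adjoint f ((1/2) *\<^sub>R z) = z" by (simp add: adjoint_f)
  qed
qed

lemma vimage_eq_image_if_right_inverse:
  assumes "inj h" "\<And>z. z \<in> S \<Longrightarrow> h (k z) = z"
  shows "h -` S = k ` S"
proof (intro set_eqI iffI)
  fix y assume "y \<in> h -` S"
  then have "h (k (h y)) = h y" "h y \<in> S" using assms(2) by auto
  then show "y \<in> k ` S" using assms(1) by (metis image_eqI injD)
qed (use assms(2) in auto)

lemma Z_midpoint_simplex:
  fixes Z :: "(real^'n) set \<Rightarrow> (real^'n) set" and p q u :: "real^'n"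
  assumes SL: "SL_contravariant_on_simplices Z"
    and bodies: "\<forall>T \<in> simplices_o. Z T \<in> convex_bodies_o"
    and R: "finite R" and distinct: "p \<noteq> q" "p \<noteq> 0" "q \<noteq> 0" "0 \<notin> R" "p \<notin> R" "q \<notin> R"
    and ind: "\<not> affine_dependent (insert 0 (insert p (insert q R)))"
    and u: "u \<noteq> 0" "u \<bullet> p = 0" "u \<bullet> q = 0" "\<forall>r\<in>R. u \<bullet> r = 0"
  defines "T \<equiv> convex hull (insert 0 (insert p (insert q R)))"
    and "W \<equiv> insert 0 (insert p (insert (midpoint p q) R))"
  shows "\<not> affine_dependent W" and "Z (convex hull W) = (\<lambda>y. (1/2) *\<^sub>R y) ` Z T"
proof -
  let ?V = "insert 0 (insert p (insert q R))"
  let ?I = "insert p (insert q R)"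
  have T: "T \<in> simplices_o" using R ind by (simp add: T_def convex_hull_in_simplices_o)
  have "independent ?I"
    using ind affine_dependent_iff_dependent[of 0 ?I] distinct by auto
  then obtain g where g: "g \<bullet> q = 1" "\<And>b. b \<in> ?I - {q} \<Longrightarrow> g \<bullet> b = 0"
    using independent_dual_vector[OF \<open>independent ?I\<close>, of q] by blast
  then have "g \<bullet> p = 0" "\<forall>r\<in>R. g \<bullet> r = 0" using distinct by auto
  with u g(1) obtain f where f: "linear f" "det (matrix f) = 1" "f p = p" "f q = midpoint p q"
    "\<forall>r\<in>R. f r = r" "\<forall>z\<in>span {u}. adjoint f ((1/2) *\<^sub>R z) = z"
    by (rule unimodular_map_to_midpoint)
  have "f ` ?V = W" using f linear_0[OF f(1)] by (auto simp: W_def image_iff)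
  moreover have "inj f" using f(1,2) det_nz_iff_inj by fastforce
  ultimately show "\<not> affine_dependent W"
    using affine_independent_injective_linear_image[OF f(1) _ ind] by simp
  have "convex hull W = f ` T"
    using convex_hull_linear_image[OF f(1)] \<open>f ` ?V = W\<close> by (simp add: T_def)
  then have Z_W: "Z (convex hull W) = adjoint f -` Z T"
    using SL_contravariant_linear_image[OF SL T f(1,2)] by simp
  have "linear (adjoint f)" using f(1) by (rule adjoint_linear)
  moreover have "det (matrix (adjoint f)) = 1" using f(1,2) by (simp add: matrix_adjoint det_transpose)
  ultimately have inj_adjoint: "inj (adjoint f)" using det_nz_iff_inj by fastforce
  have ZT: "bounded (Z T)" using bodies T by (auto simp: convex_bodies_o_def compact_imp_bounded)
  have "\<forall>x\<in>T. u \<bullet> x = 0"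
  proof -
    have "?V \<subseteq> {x. u \<bullet> x = 0}" using u by auto
    then have "T \<subseteq> {x. u \<bullet> x = 0}" unfolding T_def by (intro hull_minimal convex_hyperplane)
    then show ?thesis by blast
  qed
  then have line: "Z T \<subseteq> span {u}" using Z_subset_span_normal[OF SL T ZT u(1)] by blast
  have "adjoint f -` Z T = (\<lambda>y. (1/2) *\<^sub>R y) ` Z T"
    using f(6) line by (intro vimage_eq_image_if_right_inverse[OF inj_adjoint]) auto
  with Z_W show "Z (convex hull W) = (\<lambda>y. (1/2) *\<^sub>R y) ` Z T" by simp
qed

lemma compact_eq_scaleR_image_subset_0:
  fixes K :: "'a::real_normed_vector set"
  assumes K: "compact K" and scale: "K = (\<lambda>y. c *\<^sub>R y) ` K" and c: "\<bar>c\<bar> < 1"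
  shows "K \<subseteq> {0}"
proof (cases "K = {}")
  case False
  then obtain z where z: "z \<in> K" and max: "\<And>y. y \<in> K \<Longrightarrow> norm y \<le> norm z"
    using continuous_attains_sup[OF K, of norm] by (auto intro: continuous_intros)
  obtain w where "w \<in> K" "z = c *\<^sub>R w" using z scale by blast
  then have "norm z \<le> \<bar>c\<bar> * norm z" using max[of w] by (simp add: mult_left_mono)
  then have "norm z \<le> 0" using c by (metis abs_ge_zero mult_le_cancel_right1 norm_ge_zero not_le order_le_less_trans)
  then show ?thesis using max by (auto intro: order_trans)
qed simp

lemma Z_eq_0_if_card_lt:
  fixes Z :: "(real^'n) set \<Rightarrow> (real^'n) set"
  assumes SL: "SL_contravariant_on_simplices Z"
    and bodies: "\<forall>T \<in> simplices_o. Z T \<in> convex_bodies_o"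
    and V: "finite V" "\<not> affine_dependent V" "0 \<in> V" and card: "card V < CARD('n)"
  shows "Z (convex hull V) = {0}"
proof (rule Z_eq_0_if_codim_ge_2[OF SL bodies])
  show "convex hull V \<in> simplices_o" using V by (rule convex_hull_in_simplices_o)
  show "convex hull V \<subseteq> span V" by (rule convex_hull_subset_span)
  have "dim V \<le> card (V - {0})" using V(1) by (intro dim_le_card) (auto simp: span_base span_zero)
  moreover have "card V > 0" using V(1,3) by (auto simp: card_gt_0_iff)
  ultimately show "dim V + 2 \<le> CARD('n)" using card V(1,3) by (simp add: card_Diff_singleton)
qed

lemma affine_independent_separating_functional:
  fixes p q :: "real^'n"
  assumes distinct: "p \<noteq> q" "p \<noteq> 0" "q \<noteq> 0" "0 \<notin> R" "p \<notin> R" "q \<notin> R"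
    and ind: "\<not> affine_dependent (insert 0 (insert p (insert q R)))"
  obtains e where "e \<bullet> p = 1" "e \<bullet> q = -1" "\<forall>r\<in>R. e \<bullet> r = 0"
proof -
  let ?I = "insert p (insert q R)"
  have I: "independent ?I" using ind affine_dependent_iff_dependent[of 0 ?I] distinct by auto
  obtain gp where gp: "gp \<bullet> p = 1" "\<And>b. b \<in> ?I - {p} \<Longrightarrow> gp \<bullet> b = 0"
    using independent_dual_vector[OF I, of p] by auto
  obtain gq where gq: "gq \<bullet> q = 1" "\<And>b. b \<in> ?I - {q} \<Longrightarrow> gq \<bullet> b = 0"
    using independent_dual_vector[OF I, of q] by auto
  show ?thesis using gp gq distinct by (intro that[of "gp - gq"]) (auto simp: inner_diff_left)
qed

lemma Z_eq_0_if_spans_hyperplane: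
  fixes Z :: "(real^'n) set \<Rightarrow> (real^'n) set" and p q :: "real^'n"
  assumes SL: "SL_contravariant_on_simplices Z"
    and bodies: "\<forall>T \<in> simplices_o. Z T \<in> convex_bodies_o"
    and val: "linf_valuation_on_simplices Z"
    and R: "finite R" and distinct: "p \<noteq> q" "p \<noteq> 0" "q \<noteq> 0" "0 \<notin> R" "p \<notin> R" "q \<notin> R"
    and ind: "\<not> affine_dependent (insert 0 (insert p (insert q R)))"
    and card: "card (insert 0 (insert p (insert q R))) = CARD('n)"
  shows "Z (convex hull (insert 0 (insert p (insert q R)))) = {0}"
proof -
  define V where "V = insert 0 (insert p (insert q R))"
  define T where "T = convex hull V"
  define m where "m = midpoint p q"
  have T: "T \<in> simplices_o" using R ind by (simp add: T_def V_def convex_hull_in_simplices_o)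
  have ZT: "compact (Z T)" "convex (Z T)" "0 \<in> Z T" using bodies T by (auto simp: convex_bodies_o_def)
  have "dim V \<le> card (insert p (insert q R))"
    by (rule dim_le_card) (auto simp: V_def span_zero span_base R)
  also have "\<dots> < CARD('n)" using card distinct R by (simp add: V_def)
  finally obtain u where u: "u \<noteq> 0" "\<And>y. y \<in> span V \<Longrightarrow> orthogonal u y"
    using orthogonal_to_subspace_exists[of V] by auto
  then have u': "u \<bullet> p = 0" "u \<bullet> q = 0" "\<forall>r\<in>R. u \<bullet> r = 0"
    by (auto simp: V_def orthogonal_def span_base)
  have half_p: "\<not> affine_dependent (insert 0 (insert p (insert m R)))"
      "Z (convex hull (insert 0 (insert p (insert m R)))) = (\<lambda>y. (1/2) *\<^sub>R y) ` Z T"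
    using Z_midpoint_simplex[OF SL bodies R distinct ind u(1) u'] by (simp_all add: T_def V_def m_def)
  have "insert 0 (insert q (insert p R)) = V" by (auto simp: V_def)
  then have half_q: "\<not> affine_dependent (insert 0 (insert q (insert m R)))"
      "Z (convex hull (insert 0 (insert q (insert m R)))) = (\<lambda>y. (1/2) *\<^sub>R y) ` Z T"
    using Z_midpoint_simplex[OF SL bodies R distinct(1)[symmetric] distinct(3,2,4,6,5) _ u(1) u'(2,1,3)] ind
    by (simp_all add: T_def V_def m_def midpoint_sym)
  obtain e where e: "e \<bullet> p = 1" "e \<bullet> q = -1" "\<forall>r\<in>R. e \<bullet> r = 0"
    using affine_independent_separating_functional[OF distinct ind] by blast
  note cut = simplex_cut_at_midpoint[OF R distinct e, folded V_def T_def m_def]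
  have "\<not> affine_dependent (insert 0 (insert m R))"
    using half_p(1) affine_independent_subset[of _ "insert 0 (insert m R)"] by blast
  moreover have "card (insert 0 (insert m R)) < CARD('n)"
    using card distinct R by (simp add: card_insert_if)
  ultimately have face: "T \<inter> {x. e \<bullet> x = 0} \<in> simplices_o" "Z (T \<inter> {x. e \<bullet> x = 0}) = {0}"
    using R cut(3) Z_eq_0_if_card_lt[OF SL bodies] by (auto intro: convex_hull_in_simplices_o)
  have "T \<inter> {x. e \<bullet> x \<ge> 0} \<in> simplices_o" "T \<inter> {x. e \<bullet> x \<le> 0} \<in> simplices_o"
    using half_p(1) half_q(1) R cut by (auto intro: convex_hull_in_simplices_o)
  moreover have "T = T \<inter> {x. e \<bullet> x \<ge> 0} \<union> T \<inter> {x. e \<bullet> x \<le> 0}"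
    and "T \<inter> {x. e \<bullet> x = 0} = T \<inter> {x. e \<bullet> x \<ge> 0} \<inter> (T \<inter> {x. e \<bullet> x \<le> 0})" by auto
  ultimately have "linf_plus (Z T) (Z (T \<inter> {x. e \<bullet> x = 0}))
      = linf_plus (Z (T \<inter> {x. e \<bullet> x \<ge> 0})) (Z (T \<inter> {x. e \<bullet> x \<le> 0}))"
    using val T face(1) unfolding linf_valuation_on_simplices_def by metis
  then have "convex hull (Z T \<union> {0}) = convex hull ((\<lambda>y. (1/2) *\<^sub>R y) ` Z T)"
    using cut half_p(2) half_q(2) face(2) by (simp add: linf_plus_def)
  then have "Z T = (\<lambda>y. (1/2) *\<^sub>R y) ` Z T"
    using ZT convex_scaling[OF ZT(2), of "1/2"] by (simp add: insert_absorb) (metis convex_hull_eq)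
  then have "Z T \<subseteq> {0}" using compact_eq_scaleR_image_subset_0[OF ZT(1)] by simp
  then show ?thesis using ZT(3) by (auto simp: T_def V_def)
qed

lemma finite_set_with_0_decompose:
  assumes "finite V" "0 \<in> V" "card V \<ge> 3"
  obtains p q R where "V = insert 0 (insert p (insert q R))" "finite R"
    "p \<noteq> q" "p \<noteq> 0" "q \<noteq> 0" "0 \<notin> R" "p \<notin> R" "q \<notin> R"
proof -
  have "card (V - {0}) \<ge> 2" using assms by simp
  then obtain p where p: "p \<in> V - {0}" by (metis all_not_in_conv card.empty not_numeral_le_zero)
  with \<open>card (V - {0}) \<ge> 2\<close> have "card (V - {0} - {p}) \<ge> 1" using assms(1) by simp
  then obtain q where q: "q \<in> V - {0} - {p}" by (metis all_not_in_conv card.empty not_one_le_zero)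
  show ?thesis using p q assms(1,2) by (intro that[of p q "V - {0, p, q}"]) auto
qed

theorem lemma3p1:
  fixes Z :: "(real^'n) set \<Rightarrow> (real^'n) set"
  assumes "CARD('n) \<ge> 3"
    and "\<forall>T \<in> simplices_o. Z T \<in> convex_bodies_o"
    and "SL_contravariant_on_simplices Z"
    and "linf_valuation_on_simplices Z"
  shows "\<forall>T \<in> simplices_o. aff_dim T < int CARD('n) \<longrightarrow> Z T = {0}"
proof (intro ballI impI)
  fix T :: "(real^'n) set"
  assume "T \<in> simplices_o" and "aff_dim T < int CARD('n)"
  then obtain V where V: "finite V" "\<not> affine_dependent V" "0 \<in> V" "T = convex hull V"
    by (auto simp: simplices_o_def)
  have "int (card V) = aff_dim T + 1"
    using aff_dim_affine_independent[OF V(2)] aff_dim_convex_hull[of V] V(4) by simp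
  with \<open>aff_dim T < int CARD('n)\<close> have "card V \<le> CARD('n)" by simp
  show "Z T = {0}"
  proof (cases "card V = CARD('n)")
    case True
    with assms(1) have "card V \<ge> 3" by simp
    then obtain p q R where "V = insert 0 (insert p (insert q R))" "finite R"
      "p \<noteq> q" "p \<noteq> 0" "q \<noteq> 0" "0 \<notin> R" "p \<notin> R" "q \<notin> R"
      by (rule finite_set_with_0_decompose[OF V(1,3)])
    with True V show ?thesis using Z_eq_0_if_spans_hyperplane[OF assms(3,2,4)] by auto
  next
    case False
    with \<open>card V \<le> CARD('n)\<close> show ?thesis
      using Z_eq_0_if_card_lt[OF assms(3,2) V(1-3)] V(4) by simp
  qed
qed

end
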